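(* Let $A=(a_{ij})$ be an $n\times n$ symmetric matrix with nonnegative entries and zero diagonal, $V=\{1,\dots,n\}$, and let $S\subseteq V$ with $S\neq\emptyset$. Define $$\gamma_S=\max_{\mathbf{x}\in\Delta_{V\setminus S}}\ \min_{i\in S}\ \frac{\mathbf{x}'A\mathbf{x}-(A\mathbf{x})_i}{\mathbf{x}'\mathbf{x}}.$$ Then $\gamma_S\le\lambda_{\max}(A_{V\setminus S})$, where $\lambda_{\max}(A_{V\setminus S})$ is the largest eigenvalue of the principal submatrix of $A$ indexed by the elements of $V\setminus S$.
   Context: $\Delta=\{\mathbf{x}\in\mathbb{R}^n:\sum_i x_i=1,\ x_i\ge 0\}$ is the standard simplex; for $T\subseteq V$, $\Delta_T=\{\mathbf{x}\in\Delta:\sigma(\mathbf{x})\subseteq T\}$, where $\sigma(\mathbf{x})=\{i: x_i>0\}$. A prime denotes transposition. *)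

theory Defs
  imports "HOL-Analysis.Analysis"
begin

text \<open>Vectors in R^n are functions nat => real, indexed by V = {..<n} (0-based),
  and n x n matrices are functions nat => nat => real.\<close>

definition simplex_on :: "nat set \<Rightarrow> nat set \<Rightarrow> (nat \<Rightarrow> real) set" where
  "simplex_on V T = {x. (\<forall>i\<in>V. 0 \<le> x i) \<and> (\<Sum>i\<in>V. x i) = 1
      \<and> (\<forall>i. i \<notin> V \<longrightarrow> x i = 0) \<and> {i\<in>V. 0 < x i} \<subseteq> T}"

definition matvec :: "(nat \<Rightarrow> nat \<Rightarrow> real) \<Rightarrow> nat set \<Rightarrow> (nat \<Rightarrow> real) \<Rightarrow> nat \<Rightarrow> real" where
  "matvec A V x i = (\<Sum>j\<in>V. A i j * x j)"

definition quad_form :: "(nat \<Rightarrow> nat \<Rightarrow> real) \<Rightarrow> nat set \<Rightarrow> (nat \<Rightarrow> real) \<Rightarrow> real" where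
  "quad_form A V x = (\<Sum>i\<in>V. x i * matvec A V x i)"

definition gamma_S :: "(nat \<Rightarrow> nat \<Rightarrow> real) \<Rightarrow> nat set \<Rightarrow> nat set \<Rightarrow> real" where
  "gamma_S A V S = Sup ((\<lambda>x. Min ((\<lambda>i. (quad_form A V x - matvec A V x i) / (\<Sum>j\<in>V. x j * x j)) ` S))
                        ` simplex_on V (V - S))"

definition is_eigenvalue_sub :: "(nat \<Rightarrow> nat \<Rightarrow> real) \<Rightarrow> nat set \<Rightarrow> real \<Rightarrow> bool" where
  "is_eigenvalue_sub A T \<mu> \<longleftrightarrow> (\<exists>x::nat \<Rightarrow> real. (\<exists>i\<in>T. x i \<noteq> 0) \<and>
       (\<forall>i\<in>T. (\<Sum>j\<in>T. A i j * x j) = \<mu> * x i))"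

definition lambda_max_sub :: "(nat \<Rightarrow> nat \<Rightarrow> real) \<Rightarrow> nat set \<Rightarrow> real" where
  "lambda_max_sub A T = Max {\<mu>. is_eigenvalue_sub A T \<mu>}"

end

theory Submission
  imports Defs "Jordan_Normal_Form.Char_Poly"
begin

text \<open>For \<open>x \<in> \<Delta>\<^sub>V\<^sub>\<setminus>\<^sub>S\<close> and \<open>i \<in> S\<close> the term \<open>(A x)\<^sub>i\<close> is
  nonnegative, so the quotient in the definition of \<open>\<gamma>\<^sub>S\<close> is at most the
  Rayleigh quotient \<open>x'A x / x'x\<close>. Since \<open>x\<close> is supported on \<open>T = V \<setminus> S\<close>,
  that quotient only involves the principal submatrix \<open>A\<^sub>T\<close>, and for a symmetric
  matrix it is bounded by the largest eigenvalue: the maximum of \<open>x'A\<^sub>Tx\<close> on the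
  unit sphere exists by compactness, and at a maximizer the first-order condition says
  exactly that it is an eigenvector, for the eigenvalue \<open>x'A\<^sub>Tx\<close>.\<close>

definition sqnorm_on :: "nat set \<Rightarrow> (nat \<Rightarrow> real) \<Rightarrow> real" where
  "sqnorm_on T x = (\<Sum>i\<in>T. x i * x i)"

definition bilinear_on ::
    "(nat \<Rightarrow> nat \<Rightarrow> real) \<Rightarrow> nat set \<Rightarrow> (nat \<Rightarrow> real) \<Rightarrow> (nat \<Rightarrow> real) \<Rightarrow> real" where
  "bilinear_on A T u v = (\<Sum>i\<in>T. u i * matvec A T v i)"

lemma quad_form_add_scaled:
  "quad_form A T (\<lambda>j. u j + t * v j)
    = quad_form A T u + t * (bilinear_on A T u v + bilinear_on A T v u) + t\<^sup>2 * quad_form A T v"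
  unfolding quad_form_def bilinear_on_def matvec_def
  by (simp add: algebra_simps sum.distrib sum_distrib_left power2_eq_square)

lemma sqnorm_on_add_scaled:
  "sqnorm_on T (\<lambda>j. u j + t * v j)
    = sqnorm_on T u + 2 * t * (\<Sum>i\<in>T. u i * v i) + t\<^sup>2 * sqnorm_on T v"
  unfolding sqnorm_on_def
  by (simp add: algebra_simps sum.distrib sum_distrib_left power2_eq_square)

lemma quad_form_scale: "quad_form A T (\<lambda>j. r * u j) = r\<^sup>2 * quad_form A T u"
  unfolding quad_form_def matvec_def
  by (simp add: algebra_simps sum_distrib_left power2_eq_square)

lemma sqnorm_on_scale: "sqnorm_on T (\<lambda>j. r * u j) = r\<^sup>2 * sqnorm_on T u"
  unfolding sqnorm_on_def
  by (simp add: algebra_simps sum_distrib_left power2_eq_square)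

lemma quad_form_cong:
  "(\<And>i. i \<in> T \<Longrightarrow> u i = v i) \<Longrightarrow> quad_form A T u = quad_form A T v"
  unfolding quad_form_def matvec_def by (intro sum.cong refl) auto

lemma sqnorm_on_cong:
  "(\<And>i. i \<in> T \<Longrightarrow> u i = v i) \<Longrightarrow> sqnorm_on T u = sqnorm_on T v"
  unfolding sqnorm_on_def by (intro sum.cong refl) auto

lemma sqnorm_on_nonneg: "0 \<le> sqnorm_on T x"
  unfolding sqnorm_on_def by (intro sum_nonneg) auto

lemma square_le_sqnorm_on: "finite T \<Longrightarrow> i \<in> T \<Longrightarrow> x i * x i \<le> sqnorm_on T x"
  unfolding sqnorm_on_def by (rule member_le_sum) auto

lemma sqnorm_on_pos: "finite T \<Longrightarrow> i \<in> T \<Longrightarrow> x i \<noteq> 0 \<Longrightarrow> 0 < sqnorm_on T x"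
  using square_le_sqnorm_on[of T i x] not_real_square_gt_zero[of "x i"] by linarith

lemma sqnorm_on_eq_0_iff: "finite T \<Longrightarrow> sqnorm_on T x = 0 \<longleftrightarrow> (\<forall>i\<in>T. x i = 0)"
  using sqnorm_on_pos[of T _ x] unfolding sqnorm_on_def by fastforce

lemma linear_coeff_eq_0_if_quadratic_nonpos:
  fixes c d :: real
  assumes "\<forall>t. 2 * t * c + t\<^sup>2 * d \<le> 0"
  shows "c = 0"
proof (rule ccontr)
  assume c: "c \<noteq> 0"
  define e where "e = \<bar>d\<bar> + 1"
  have e: "e > 0" "d \<ge> 1 - e" unfolding e_def by auto
  define t where "t = c / e"
  have "2 * t * c + t\<^sup>2 * (1 - e) = c\<^sup>2 * (e + 1) / e\<^sup>2"
    unfolding t_def using e by (simp add: field_simps power2_eq_square)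
  moreover have "t\<^sup>2 * (1 - e) \<le> t\<^sup>2 * d" using e by (intro mult_left_mono) auto
  moreover have "c\<^sup>2 * (e + 1) / e\<^sup>2 > 0" using c e by (intro divide_pos_pos mult_pos_pos) auto
  ultimately show False using assms by (smt (verit))
qed

lemma compact_unit_sphere_on:
  "compact {x::nat \<Rightarrow> real. (\<forall>i. i \<in> T \<or> x i = 0) \<and> sqnorm_on T x = 1}" (is "compact ?U")
proof -
  define K where "K = PiE UNIV (\<lambda>i. if i \<in> T then {-1..1::real} else {0})"
  have "compactin (product_topology (\<lambda>i. euclidean) UNIV) K"
    unfolding K_def by (subst compactin_PiE) auto
  then have "compact K" by (simp add: euclidean_product_topology)
  moreover have "closed ?U"
    unfolding sqnorm_on_def
    by (intro closed_Collect_all closed_Collect_disj closed_Collect_conj closed_Collect_eq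
        closed_Collect_const continuous_intros continuous_on_product_coordinates)
  moreover have "?U \<subseteq> K"
  proof
    fix x assume x: "x \<in> ?U"
    have "\<bar>x i\<bar> \<le> 1" if "i \<in> T" for i
    proof -
      have "finite T" using x sum.infinite unfolding sqnorm_on_def by fastforce
      then have "\<bar>x i\<bar>\<^sup>2 \<le> 1\<^sup>2"
        using x square_le_sqnorm_on[OF _ that, of x] by (simp add: power2_eq_square)
      then show ?thesis by (rule power2_le_imp_le) simp
    qed
    with x show "x \<in> K" unfolding K_def PiE_def extensional_def Pi_def by (auto simp: abs_le_iff)
  qed
  ultimately show ?thesis using compact_Int_closed[of K ?U] by (simp add: Int_absorb1)
qed

lemma rayleigh_maximizer_exists:
  assumes "finite T" and "T \<noteq> {}"
  obtains x where "sqnorm_on T x = 1"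
    and "\<And>y. quad_form A T y \<le> quad_form A T x * sqnorm_on T y"
proof -
  define U where "U = {x::nat \<Rightarrow> real. (\<forall>i. i \<in> T \<or> x i = 0) \<and> sqnorm_on T x = 1}"
  obtain i0 where "i0 \<in> T" using assms(2) by blast
  then have "(\<lambda>j. if j = i0 then 1 else 0) \<in> U"
    unfolding U_def sqnorm_on_def using assms(1) by (simp add: if_distrib cong: if_cong)
  then have "U \<noteq> {}" by blast
  moreover have "continuous_on U (quad_form A T)"
    unfolding quad_form_def matvec_def
    by (intro continuous_intros continuous_on_subset[OF continuous_on_product_coordinates]; simp)
  ultimately obtain x where xU: "x \<in> U"
    and xmax: "\<And>z. z \<in> U \<Longrightarrow> quad_form A T z \<le> quad_form A T x"
    using continuous_attains_sup[OF compact_unit_sphere_on[of T, folded U_def]] by blast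
  have "quad_form A T y \<le> quad_form A T x * sqnorm_on T y" for y
  proof (cases "sqnorm_on T y = 0")
    case True
    then have "quad_form A T y = quad_form A T (\<lambda>_. 0)"
      using sqnorm_on_eq_0_iff[OF assms(1)] by (intro quad_form_cong) auto
    with True show ?thesis by (simp add: quad_form_def)
  next
    case False
    define c where "c = sqrt (sqnorm_on T y)"
    have c: "c > 0" "c\<^sup>2 = sqnorm_on T y" using False sqnorm_on_nonneg[of T y] unfolding c_def by auto
    define z where "z = (\<lambda>i. if i \<in> T then (1 / c) * y i else 0)"
    have "sqnorm_on T z = (1 / c)\<^sup>2 * sqnorm_on T y"
      unfolding sqnorm_on_scale[symmetric] z_def by (rule sqnorm_on_cong) simp
    then have "z \<in> U" unfolding U_def z_def using c False by (simp add: power_divide)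
    moreover have "quad_form A T z = (1 / c)\<^sup>2 * quad_form A T y"
      unfolding quad_form_scale[symmetric] z_def by (rule quad_form_cong) simp
    ultimately have "quad_form A T y / sqnorm_on T y \<le> quad_form A T x"
      using xmax[of z] c by (simp add: power_divide)
    moreover have "0 < sqnorm_on T y" using False sqnorm_on_nonneg[of T y] by linarith
    ultimately show ?thesis by (simp add: pos_divide_le_eq)
  qed
  moreover have "sqnorm_on T x = 1" using xU unfolding U_def by blast
  ultimately show thesis using that by blast
qed

text \<open>Perturbing the maximizer \<open>x\<close> in direction \<open>e\<^sub>i\<close>, the quadratic
  \<open>t \<mapsto> M \<parallel>x + t e\<^sub>i\<parallel>\<^sup>2 - (x + t e\<^sub>i)'A(x + t e\<^sub>i)\<close> is nonnegative and vanishes at \<open>t = 0\<close>,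
  so its linear coefficient \<open>2(M x\<^sub>i - (A x)\<^sub>i)\<close> vanishes.\<close>

lemma rayleigh_maximizer_eigenvector:
  assumes fin: "finite T" and i: "i \<in> T"
    and symm: "\<forall>j\<in>T. \<forall>k\<in>T. A j k = A k j"
    and unit: "sqnorm_on T x = 1"
    and max: "\<And>y. quad_form A T y \<le> quad_form A T x * sqnorm_on T y"
  shows "matvec A T x i = quad_form A T x * x i"
proof -
  define M where "M = quad_form A T x"
  define e where "e = (\<lambda>j::nat. if j = i then 1 else (0::real))"
  have "bilinear_on A T x e = (\<Sum>j\<in>T. x j * A j i)"
    unfolding bilinear_on_def matvec_def e_def using fin i by (simp add: if_distrib if_distribR cong: if_cong)
  also have "\<dots> = matvec A T x i"
    unfolding matvec_def using symm i by (intro sum.cong) (auto simp: mult.commute)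
  finally have xe: "bilinear_on A T x e = matvec A T x i" .
  have ex: "bilinear_on A T e x = matvec A T x i"
    unfolding bilinear_on_def e_def using fin i by (simp add: if_distrib if_distribR cong: if_cong)
  have ee: "quad_form A T e = A i i"
    unfolding quad_form_def matvec_def e_def using fin i by (simp add: if_distrib if_distribR cong: if_cong)
  have xe_dot: "(\<Sum>j\<in>T. x j * e j) = x i" and e_unit: "sqnorm_on T e = 1"
    unfolding sqnorm_on_def e_def using fin i by (simp_all add: if_distrib if_distribR cong: if_cong)
  have "\<forall>t. 2 * t * (matvec A T x i - M * x i) + t\<^sup>2 * (A i i - M) \<le> 0"
  proof
    fix t
    have "quad_form A T (\<lambda>j. x j + t * e j) \<le> M * sqnorm_on T (\<lambda>j. x j + t * e j)"
      unfolding M_def by (rule max)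
    then show "2 * t * (matvec A T x i - M * x i) + t\<^sup>2 * (A i i - M) \<le> 0"
      unfolding quad_form_add_scaled sqnorm_on_add_scaled xe ex ee xe_dot e_unit unit M_def[symmetric]
      by (simp add: algebra_simps)
  qed
  then show ?thesis using linear_coeff_eq_0_if_quadratic_nonpos unfolding M_def by fastforce
qed

lemma eigenvalue_bounds_rayleigh_quotient:
  assumes "finite T" and "T \<noteq> {}" and "\<forall>j\<in>T. \<forall>k\<in>T. A j k = A k j"
  obtains M where "is_eigenvalue_sub A T M" and "\<And>y. quad_form A T y \<le> M * sqnorm_on T y"
proof -
  obtain x where unit: "sqnorm_on T x = 1"
    and max: "\<And>y. quad_form A T y \<le> quad_form A T x * sqnorm_on T y"
    using rayleigh_maximizer_exists[OF assms(1,2)] by blast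
  have "\<exists>i\<in>T. x i \<noteq> 0" using unit sqnorm_on_eq_0_iff[OF assms(1), of x] by auto
  moreover have "\<forall>i\<in>T. matvec A T x i = quad_form A T x * x i"
    using rayleigh_maximizer_eigenvector[OF assms(1) _ assms(3) unit max] by blast
  ultimately have "is_eigenvalue_sub A T (quad_form A T x)"
    unfolding is_eigenvalue_sub_def matvec_def by blast
  then show thesis using max that by blast
qed

lemma quad_form_eigenvector:
  assumes "\<forall>i\<in>T. (\<Sum>j\<in>T. A i j * v j) = \<mu> * v i"
  shows "quad_form A T v = \<mu> * sqnorm_on T v"
proof -
  have "quad_form A T v = (\<Sum>i\<in>T. v i * (\<mu> * v i))"
    unfolding quad_form_def matvec_def using assms by (intro sum.cong) auto
  then show ?thesis unfolding sqnorm_on_def by (simp add: sum_distrib_left mult_ac)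
qed

lemma finite_eigenvalues_sub:
  assumes "finite T"
  shows "finite {\<mu>. is_eigenvalue_sub A T \<mu>}"
proof -
  obtain h where h: "bij_betw h {0..<card T} T" using ex_bij_betw_nat_finite[OF assms] by blast
  define k where "k = card T"
  define Am where "Am = mat k k (\<lambda>(a, b). A (h a) (h b))"
  have Am: "Am \<in> carrier_mat k k" unfolding Am_def by simp
  have "{\<mu>. is_eigenvalue_sub A T \<mu>} \<subseteq> {\<mu>. poly (char_poly Am) \<mu> = 0}"
  proof
    fix \<mu> assume "\<mu> \<in> {\<mu>. is_eigenvalue_sub A T \<mu>}"
    then obtain x where x_ne: "\<exists>i\<in>T. x i \<noteq> 0"
      and x_eig: "\<forall>i\<in>T. (\<Sum>j\<in>T. A i j * x j) = \<mu> * x i"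
      unfolding is_eigenvalue_sub_def by auto
    define v where "v = vec k (\<lambda>a. x (h a))"
    have v: "v \<in> carrier_vec k" unfolding v_def by simp
    have "v \<noteq> 0\<^sub>v k"
    proof
      assume "v = 0\<^sub>v k"
      then have "\<forall>a<k. x (h a) = 0" unfolding v_def by (metis index_vec index_zero_vec(1))
      moreover have "T = h ` {0..<k}" using h unfolding bij_betw_def k_def by simp
      ultimately show False using x_ne by auto
    qed
    moreover have "Am *\<^sub>v v = \<mu> \<cdot>\<^sub>v v"
    proof (rule eq_vecI)
      show "dim_vec (Am *\<^sub>v v) = dim_vec (\<mu> \<cdot>\<^sub>v v)" using Am v by simp
      fix a assume "a < dim_vec (\<mu> \<cdot>\<^sub>v v)"
      then have a: "a < k" using v by simp
      have "(Am *\<^sub>v v) $ a = (\<Sum>b\<in>{0..<k}. A (h a) (h b) * x (h b))"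
        using a unfolding Am_def v_def by (simp add: mult_mat_vec_def scalar_prod_def row_def)
      also have "\<dots> = (\<Sum>j\<in>T. A (h a) j * x j)"
        using sum.reindex_bij_betw[OF h, of "\<lambda>j. A (h a) j * x j"] unfolding k_def by simp
      also have "\<dots> = \<mu> * x (h a)" using x_eig a h unfolding k_def bij_betw_def by auto
      finally show "(Am *\<^sub>v v) $ a = (\<mu> \<cdot>\<^sub>v v) $ a" using a unfolding v_def by simp
    qed
    ultimately have "eigenvalue Am \<mu>" unfolding eigenvalue_def eigenvector_def using Am v by auto
    then show "\<mu> \<in> {\<mu>. poly (char_poly Am) \<mu> = 0}" using eigenvalue_root_char_poly[OF Am] by simp
  qed
  moreover have "char_poly Am \<noteq> 0" using degree_monic_char_poly[OF Am] by auto
  ultimately show ?thesis using poly_roots_finite finite_subset by blast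
qed

lemma quad_form_le_lambda_max_sub:
  assumes fin: "finite T" and "T \<noteq> {}" and "\<forall>j\<in>T. \<forall>k\<in>T. A j k = A k j"
  shows "quad_form A T y \<le> lambda_max_sub A T * sqnorm_on T y"
proof -
  obtain M where M: "is_eigenvalue_sub A T M" and bound: "\<And>y. quad_form A T y \<le> M * sqnorm_on T y"
    using eigenvalue_bounds_rayleigh_quotient[OF assms] by blast
  have "lambda_max_sub A T = M"
    unfolding lambda_max_sub_def
  proof (rule Max_eqI)
    show "finite {\<mu>. is_eigenvalue_sub A T \<mu>}" by (rule finite_eigenvalues_sub[OF fin])
    show "M \<in> {\<mu>. is_eigenvalue_sub A T \<mu>}" using M by simp
    fix \<mu> assume "\<mu> \<in> {\<mu>. is_eigenvalue_sub A T \<mu>}"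
    then obtain v where v_ne: "\<exists>i\<in>T. v i \<noteq> 0"
      and v_eig: "\<forall>i\<in>T. (\<Sum>j\<in>T. A i j * v j) = \<mu> * v i"
      unfolding is_eigenvalue_sub_def by auto
    have "\<mu> * sqnorm_on T v \<le> M * sqnorm_on T v"
      using bound[of v] quad_form_eigenvector[OF v_eig] by simp
    moreover have "0 < sqnorm_on T v" using v_ne sqnorm_on_pos[OF fin] by blast
    ultimately show "\<mu> \<le> M" by simp
  qed
  with bound show ?thesis by simp
qed

lemma matvec_restrict:
  assumes "finite V" and "T \<subseteq> V" and "\<forall>j\<in>V - T. x j = 0"
  shows "matvec A V x i = matvec A T x i"
  unfolding matvec_def using assms by (intro sum.mono_neutral_right) auto

lemma quad_form_restrict:
  assumes "finite V" and "T \<subseteq> V" and "\<forall>j\<in>V - T. x j = 0"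
  shows "quad_form A V x = quad_form A T x"
  unfolding quad_form_def matvec_restrict[OF assms] using assms
  by (intro sum.mono_neutral_right) auto

lemma sqnorm_on_restrict:
  assumes "finite V" and "T \<subseteq> V" and "\<forall>j\<in>V - T. x j = 0"
  shows "sqnorm_on V x = sqnorm_on T x"
  unfolding sqnorm_on_def using assms by (intro sum.mono_neutral_right) auto

lemma simplex_on_nonempty:
  assumes "finite V" and "T \<subseteq> V" and "T \<noteq> {}"
  shows "simplex_on V T \<noteq> {}"
proof -
  obtain t where "t \<in> T" using assms(3) by blast
  then have "(\<lambda>j. if j = t then 1 else 0) \<in> simplex_on V T"
    unfolding simplex_on_def using assms(1,2) by auto
  then show ?thesis by blast
qed

lemma simplex_quotient_le_lambda_max_sub:
  assumes fin: "finite V" and TV: "T \<subseteq> V" and "T \<noteq> {}"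
    and symm: "\<forall>j\<in>T. \<forall>k\<in>T. A j k = A k j"
    and row_nonneg: "\<forall>j\<in>T. 0 \<le> A i j"
    and x: "x \<in> simplex_on V T"
  shows "(quad_form A V x - matvec A V x i) / (\<Sum>j\<in>V. x j * x j) \<le> lambda_max_sub A T"
proof -
  have finT: "finite T" using fin TV finite_subset by blast
  have supp: "\<forall>j\<in>V - T. x j = 0" and x_nonneg: "\<forall>j\<in>V. 0 \<le> x j"
    using x unfolding simplex_on_def by force+
  have "(\<Sum>j\<in>T. x j) = 1"
    using x sum.mono_neutral_right[OF fin TV, of x] supp unfolding simplex_on_def by simp
  then obtain j where "j \<in> T" "x j \<noteq> 0" by (metis sum.neutral zero_neq_one)
  then have "0 < sqnorm_on T x" using sqnorm_on_pos[OF finT] by blast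
  moreover have "0 \<le> matvec A V x i"
    unfolding matvec_restrict[OF fin TV supp] unfolding matvec_def
    using row_nonneg x_nonneg TV by (auto intro!: sum_nonneg)
  moreover have "quad_form A T x \<le> lambda_max_sub A T * sqnorm_on T x"
    using finT assms(3) symm by (rule quad_form_le_lambda_max_sub)
  moreover have "(\<Sum>j\<in>V. x j * x j) = sqnorm_on T x"
    using sqnorm_on_restrict[OF fin TV supp] unfolding sqnorm_on_def .
  ultimately show ?thesis
    unfolding quad_form_restrict[OF fin TV supp] by (simp add: pos_divide_le_eq)
qed

theorem proposition2:
  fixes n :: nat and A :: "nat \<Rightarrow> nat \<Rightarrow> real" and S :: "nat set"
  assumes symm: "\<forall>i<n. \<forall>j<n. A i j = A j i"
    and nonneg: "\<forall>i<n. \<forall>j<n. 0 \<le> A i j"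
    and diag: "\<forall>i<n. A i i = 0"
    and S_sub: "S \<subseteq> {..<n}"
    and S_ne: "S \<noteq> {}"
    and S_proper: "{..<n} - S \<noteq> {}"
  shows "gamma_S A {..<n} S \<le> lambda_max_sub A ({..<n} - S)"
proof -
  define V T where "V = {..<n}" and "T = V - S"
  have fin: "finite V" and TV: "T \<subseteq> V" and T_ne: "T \<noteq> {}"
    using S_proper unfolding V_def T_def by auto
  obtain i0 where i0: "i0 \<in> S" using S_ne by blast
  define F where "F x = Min ((\<lambda>i. (quad_form A V x - matvec A V x i) / (\<Sum>j\<in>V. x j * x j)) ` S)"
    for x
  have "F x \<le> lambda_max_sub A T" if "x \<in> simplex_on V T" for x
  proof -
    have "F x \<le> (quad_form A V x - matvec A V x i0) / (\<Sum>j\<in>V. x j * x j)"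
      unfolding F_def using i0 finite_subset[OF S_sub] by (intro Min_le) auto
    also have "\<dots> \<le> lambda_max_sub A T"
      using fin TV T_ne that symm nonneg i0 S_sub unfolding V_def T_def
      by (intro simplex_quotient_le_lambda_max_sub) auto
    finally show ?thesis .
  qed
  then have "Sup (F ` simplex_on V T) \<le> lambda_max_sub A T"
    using simplex_on_nonempty[OF fin TV T_ne] by (intro cSup_least) auto
  moreover have "gamma_S A V S = Sup (F ` simplex_on V T)"
    unfolding gamma_S_def F_def T_def ..
  ultimately show ?thesis unfolding V_def T_def by simp
qed

end
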